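(* Let $X_1,X_2,\ldots$ be i.i.d. real random variables distributed as $X$, with distribution function $F$ having finite variance. Let $\hat F_n$ be the empirical distribution function of $X_1,\ldots,X_n$. For $t$ with $\mathbb P(X>t)>0$, let $X_t$ be a random variable distributed as $X$ conditional on $X>t$, and set $\mathrm{Var}\,X_t=0$ if $\mathbb P(X>t)=0$. If $\mathrm{Var}\,X_t\to\infty$ as $t\to\infty$, then $n^{1/2}d_2(\hat F_n,F)\to\infty$ almost surely as $n\to\infty$.
   Context: The Mallows distance between distribution functions $F,G$ with finite second moments is \[ d_2(F,G)=\inf\{(\mathbb E|X-Y|^2)^{1/2}\}, \] where the infimum is over all couplings with marginals $F$ and $G$. Equivalently, \[ d_2(F,G)=\Bigl(\int_0^1|F^{-1}(p)-G^{-1}(p)|^2dp\Bigr)^{1/2}, \] with $F^{-1}(p)=\inf\{x:F(x)\ge p\}$. The empirical distribution function is $\hat F_n(x)=n^{-1}\sum_{i=1}^n\mathbf 1_{\{X_i\le x\}}$. *)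

theory Defs
  imports "HOL-Probability.Probability"
begin

definition quantile :: "(real \<Rightarrow> real) \<Rightarrow> real \<Rightarrow> real" where
  "quantile G p = Inf {x. p \<le> G x}"

text \<open>Mallows distance via the quantile representation (integral over (0,1);
  the endpoints form a null set).\<close>
definition mallows_d2 :: "(real \<Rightarrow> real) \<Rightarrow> (real \<Rightarrow> real) \<Rightarrow> real" where
  "mallows_d2 F G = sqrt (LBINT p:{0<..<1}. \<bar>quantile F p - quantile G p\<bar>\<^sup>2)"

text \<open>Empirical distribution function of the first n observations X 0, ..., X (n-1).\<close>
definition ecdf :: "(nat \<Rightarrow> 'a \<Rightarrow> real) \<Rightarrow> nat \<Rightarrow> 'a \<Rightarrow> real \<Rightarrow> real" where
  "ecdf X n \<omega> x = real (card {i \<in> {..<n}. X i \<omega> \<le> x}) / real n"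

definition cdf_of :: "real measure \<Rightarrow> real \<Rightarrow> real" where
  "cdf_of \<mu> x = measure \<mu> {..x}"

definition tail_var :: "real measure \<Rightarrow> real \<Rightarrow> real" where
  "tail_var \<mu> t =
     (if measure \<mu> {t<..} > 0 then
        (let p = measure \<mu> {t<..};
             m = (\<integral>x. indicator {t<..} x * x \<partial>\<mu>) / p
         in (\<integral>x. indicator {t<..} x * (x - m)\<^sup>2 \<partial>\<mu>) / p)
      else 0)"

end

theory Submission
  imports Defs
begin

(* The divergence holds for every sequence of observations, whatever their joint law. On (1 - 1/n, 1) the empirical quantile function equals
   the sample maximum c, hence d_2(F_n, F)^2 is at least the integral of (F^-1(p) - c)^2 over
   (1 - 1/n, 1). With t = F^-1(1 - 1/n), this is the second moment about c of the tail (t, oo)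
   plus part of a possible atom at t. A conditional variance is the least conditional second
   moment, so if Var X_t' >= K for all t' >= T, both (t, oo) and, by a left limit, [t, oo) have
   second moment about c at least K times their mass; interpolating between the two bounds the
   integral below by K/n once 1/n < P(X > T). *)

lemma mallows_d2_nonneg: "0 \<le> mallows_d2 F G"
  unfolding mallows_d2_def set_lebesgue_integral_def
  by (simp add: Bochner_Integration.integral_nonneg)

lemma cdf_of_eq_cdf: "cdf_of = cdf"
  by (intro ext) (simp add: cdf_of_def cdf_def)

lemma measure_greaterThan_pos_if_tail_var_pos:
  "0 < tail_var \<mu> t \<Longrightarrow> 0 < measure \<mu> {t<..}"
  unfolding tail_var_def by (auto split: if_splits)

definition sample_max :: "(nat \<Rightarrow> 'a \<Rightarrow> real) \<Rightarrow> nat \<Rightarrow> 'a \<Rightarrow> real" where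
  "sample_max X n \<omega> = Max ((\<lambda>i. X i \<omega>) ` {..<n})"

definition sample_min :: "(nat \<Rightarrow> 'a \<Rightarrow> real) \<Rightarrow> nat \<Rightarrow> 'a \<Rightarrow> real" where
  "sample_min X n \<omega> = Min ((\<lambda>i. X i \<omega>) ` {..<n})"

context
  fixes X :: "nat \<Rightarrow> 'a \<Rightarrow> real" and n :: nat and \<omega> :: 'a
  assumes n_pos: "0 < n"
begin

lemma sample_min_le: "i < n \<Longrightarrow> sample_min X n \<omega> \<le> X i \<omega>"
  by (simp add: sample_min_def)

lemma le_sample_max: "i < n \<Longrightarrow> X i \<omega> \<le> sample_max X n \<omega>"
  by (simp add: sample_max_def)

lemma sample_max_attained: "\<exists>i<n. X i \<omega> = sample_max X n \<omega>"
proof -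
  have "sample_max X n \<omega> \<in> (\<lambda>i. X i \<omega>) ` {..<n}"
    unfolding sample_max_def using n_pos by (intro Max_in) auto
  then show ?thesis
    by force
qed

lemma ecdf_eq_1_if_sample_max_le:
  assumes "sample_max X n \<omega> \<le> x"
  shows "ecdf X n \<omega> x = 1"
proof -
  have "{i \<in> {..<n}. X i \<omega> \<le> x} = {..<n}"
    using assms le_sample_max by (auto intro: order.trans)
  then show ?thesis
    using n_pos by (simp add: ecdf_def)
qed

lemma ecdf_eq_0_if_less_sample_min:
  assumes "x < sample_min X n \<omega>"
  shows "ecdf X n \<omega> x = 0"
proof -
  have "{i \<in> {..<n}. X i \<omega> \<le> x} = {}"
    using assms sample_min_le by (auto simp: not_le intro: less_le_trans)
  then show ?thesis
    by (simp add: ecdf_def)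
qed

lemma ecdf_le_if_less_sample_max:
  assumes "x < sample_max X n \<omega>"
  shows "ecdf X n \<omega> x \<le> 1 - 1 / n"
proof -
  obtain j where j: "j < n" "X j \<omega> = sample_max X n \<omega>"
    using sample_max_attained by blast
  have "card {i \<in> {..<n}. X i \<omega> \<le> x} \<le> card ({..<n} - {j})"
    using assms j by (intro card_mono) auto
  then have "real (card {i \<in> {..<n}. X i \<omega> \<le> x}) \<le> real n - 1"
    using j(1) by simp
  then show ?thesis
    using n_pos by (simp add: ecdf_def field_simps)
qed

lemma
  assumes "0 < p" "p \<le> 1"
  shows sample_max_in_ecdf_superlevel: "sample_max X n \<omega> \<in> {x. p \<le> ecdf X n \<omega> x}"
    and bdd_below_ecdf_superlevel: "bdd_below {x. p \<le> ecdf X n \<omega> x}"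
    and sample_min_le_quantile_ecdf: "sample_min X n \<omega> \<le> quantile (ecdf X n \<omega>) p"
    and quantile_ecdf_le_sample_max: "quantile (ecdf X n \<omega>) p \<le> sample_max X n \<omega>"
proof -
  let ?S = "{x. p \<le> ecdf X n \<omega> x}"
  show max_in: "sample_max X n \<omega> \<in> ?S"
    using assms ecdf_eq_1_if_sample_max_le by simp
  have lower: "sample_min X n \<omega> \<le> x" if "x \<in> ?S" for x
    using that assms ecdf_eq_0_if_less_sample_min[of x] by fastforce
  then show "bdd_below ?S"
    by (rule bdd_belowI)
  show "sample_min X n \<omega> \<le> quantile (ecdf X n \<omega>) p"
    unfolding quantile_def using max_in lower by (intro cInf_greatest) auto
  show "quantile (ecdf X n \<omega>) p \<le> sample_max X n \<omega>"
    unfolding quantile_def using max_in \<open>bdd_below ?S\<close> by (rule cInf_lower)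
qed

lemma quantile_ecdf_eq_sample_max:
  assumes "1 - 1 / n < p" "p \<le> 1"
  shows "quantile (ecdf X n \<omega>) p = sample_max X n \<omega>"
proof -
  have "p \<le> ecdf X n \<omega> x \<longleftrightarrow> sample_max X n \<omega> \<le> x" for x
    using assms ecdf_eq_1_if_sample_max_le ecdf_le_if_less_sample_max[of x] by fastforce
  then have "{x. p \<le> ecdf X n \<omega> x} = {sample_max X n \<omega>..}"
    by auto
  then show ?thesis
    by (simp add: quantile_def)
qed

lemma mono_on_quantile_ecdf: "mono_on {0<..1} (quantile (ecdf X n \<omega>))"
proof (rule mono_onI)
  fix p p' :: real
  assume "p \<in> {0<..1}" "p' \<in> {0<..1}" "p \<le> p'"
  then show "quantile (ecdf X n \<omega>) p \<le> quantile (ecdf X n \<omega>) p'"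
    unfolding quantile_def using sample_max_in_ecdf_superlevel[of p'] bdd_below_ecdf_superlevel[of p]
    by (intro cInf_superset_mono) auto
qed

end

context real_distribution
begin

lemma measure_greaterThan_eq_1_minus_cdf: "measure M {t<..} = 1 - cdf M t"
proof -
  have "measure M (space M - {..t}) = 1 - measure M {..t}"
    by (rule prob_compl) simp
  moreover have "space M - {..t} = {t<..}"
    by auto
  ultimately show ?thesis
    by (simp add: cdf_def)
qed

lemma integrable_indicator_mult_square_diff:
  assumes sq: "integrable M (\<lambda>x. x\<^sup>2)" and A: "A \<in> sets borel"
  shows "integrable M (\<lambda>x. indicator A x * x\<^sup>2)" "integrable M (\<lambda>x. indicator A x * x)"
    and "integrable M (\<lambda>x. indicator A x * (x - c)\<^sup>2)"
proof -
  have "integrable M (\<lambda>x. x)"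
    by (rule square_integrable_imp_integrable[OF _ sq]) simp
  moreover have "(\<lambda>x. (x - c)\<^sup>2) = (\<lambda>x. x\<^sup>2 - 2 * c * x + c\<^sup>2)"
    by (simp add: power2_diff algebra_simps)
  ultimately have "integrable M (\<lambda>x. (x - c)\<^sup>2)"
    using sq by simp
  with sq \<open>integrable M (\<lambda>x. x)\<close> show "integrable M (\<lambda>x. indicator A x * x\<^sup>2)"
      "integrable M (\<lambda>x. indicator A x * x)" "integrable M (\<lambda>x. indicator A x * (x - c)\<^sup>2)"
    using A integrable_mult_indicator[of A M "\<lambda>x. x\<^sup>2"] integrable_mult_indicator[of A M "\<lambda>x. x"]
      integrable_mult_indicator[of A M "\<lambda>x. (x - c)\<^sup>2"]
    by simp_all
qed

lemma integral_indicator_mult_square_diff: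
  assumes "integrable M (\<lambda>x. x\<^sup>2)" "A \<in> sets borel"
  shows "(\<integral>x. indicator A x * (x - c)\<^sup>2 \<partial>M) =
    (\<integral>x. indicator A x * x\<^sup>2 \<partial>M) - 2 * c * (\<integral>x. indicator A x * x \<partial>M) + c\<^sup>2 * measure M A"
proof -
  have "(\<lambda>x. indicator A x * (x - c)\<^sup>2) =
      (\<lambda>x. indicator A x * x\<^sup>2 - 2 * c * (indicator A x * x) + c\<^sup>2 * indicator A x)"
    by (auto simp: power2_diff algebra_simps)
  moreover note integrable_indicator_mult_square_diff(1,2)[OF assms]
  moreover have "integrable M (indicator A :: real \<Rightarrow> real)"
    using assms(2) by (intro integrable_real_indicator) (auto simp: emeasure_eq_measure)
  ultimately show ?thesis
    by (simp add: integral_add integral_diff)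
qed

lemma measure_mult_tail_var_le:
  assumes sq: "integrable M (\<lambda>x. x\<^sup>2)" and pos: "0 < measure M {t<..}"
  shows "measure M {t<..} * tail_var M t \<le> (\<integral>x. indicator {t<..} x * (x - c)\<^sup>2 \<partial>M)"
proof -
  define p where "p = measure M {t<..}"
  define I1 where "I1 = (\<integral>x. indicator {t<..} x * x \<partial>M)"
  define I2 where "I2 = (\<integral>x. indicator {t<..} x * x\<^sup>2 \<partial>M)"
  define m where "m = I1 / p"
  have expand: "(\<integral>x. indicator {t<..} x * (x - a)\<^sup>2 \<partial>M) = I2 - 2 * a * I1 + a\<^sup>2 * p" for a
    unfolding I1_def I2_def p_def by (rule integral_indicator_mult_square_diff[OF sq]) simp
  have "p * tail_var M t = I2 - 2 * m * I1 + m\<^sup>2 * p"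
    using pos by (simp add: tail_var_def Let_def expand p_def I1_def m_def)
  also have "\<dots> = I2 - 2 * c * I1 + c\<^sup>2 * p - p * (c - m)\<^sup>2"
    using pos by (simp add: m_def p_def field_simps power2_eq_square)
  also have "\<dots> \<le> I2 - 2 * c * I1 + c\<^sup>2 * p"
    using pos by (simp add: p_def)
  finally show ?thesis
    by (simp add: expand p_def)
qed

lemma tendsto_integral_indicator_greaterThan_left:
  fixes g :: "real \<Rightarrow> real"
  assumes "integrable M g"
  shows "(\<lambda>k. \<integral>x. indicator {t - 1 / Suc k<..} x * g x \<partial>M) \<longlonglongrightarrow> (\<integral>x. indicator {t..} x * g x \<partial>M)"
proof (rule integral_dominated_convergence[where w="\<lambda>x. \<bar>g x\<bar>"])
  show "AE x in M. (\<lambda>k. indicator {t - 1 / Suc k<..} x * g x) \<longlonglongrightarrow> indicator {t..} x * g x"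
  proof (intro AE_I2)
    fix x :: real
    have "\<forall>\<^sub>F k in sequentially. indicator {t - 1 / Suc k<..} x = (indicator {t..} x :: real)"
    proof (cases "t \<le> x")
      case True
      have "t - 1 / Suc k < x" for k
        using True by (smt (verit) of_nat_0_less_iff zero_less_Suc divide_pos_pos)
      then show ?thesis
        using True by (simp add: indicator_def)
    next
      case False
      then have "\<forall>\<^sub>F k in sequentially. 1 / real (Suc k) < t - x"
        using LIMSEQ_inverse_real_of_nat by (intro order_tendstoD(2)) (auto simp: inverse_eq_divide)
      then show ?thesis
        by eventually_elim (use False in \<open>auto simp: indicator_def\<close>)
    qed
    then show "(\<lambda>k. indicator {t - 1 / Suc k<..} x * g x) \<longlonglongrightarrow> indicator {t..} x * g x"
      by (intro tendsto_eventually) (auto elim: eventually_mono)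
  qed
  show "(\<lambda>x. indicator {t - 1 / Suc k<..} x * g x) \<in> borel_measurable M"
    "AE x in M. norm (indicator {t - 1 / Suc k<..} x * g x) \<le> \<bar>g x\<bar>" for k
    using assms by (auto simp: indicator_def)
qed (use assms in auto)

lemma measure_atLeast_mult_le_integral:
  assumes sq: "integrable M (\<lambda>x. x\<^sup>2)" and K: "0 < K"
    and tail: "\<And>t. T \<le> t \<Longrightarrow> K \<le> tail_var M t" and "T < t"
  shows "measure M {t..} * K \<le> (\<integral>x. indicator {t..} x * (x - c)\<^sup>2 \<partial>M)"
proof -
  define t' where "t' k = t - 1 / Suc k" for k :: nat
  have "\<forall>\<^sub>F k in sequentially. 1 / real (Suc k) < t - T"
    using \<open>T < t\<close> LIMSEQ_inverse_real_of_nat by (intro order_tendstoD(2)) (auto simp: inverse_eq_divide)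
  then have "\<forall>\<^sub>F k in sequentially. T \<le> t' k"
    by eventually_elim (simp add: t'_def)
  then have le: "\<forall>\<^sub>F k in sequentially.
      measure M {t' k<..} * K \<le> (\<integral>x. indicator {t' k<..} x * (x - c)\<^sup>2 \<partial>M)"
  proof eventually_elim
    case (elim k)
    then have pos: "0 < measure M {t' k<..}"
      using tail K by (intro measure_greaterThan_pos_if_tail_var_pos) (auto intro: less_le_trans)
    have "measure M {t' k<..} * K \<le> measure M {t' k<..} * tail_var M (t' k)"
      using tail[OF elim] pos by simp
    also have "\<dots> \<le> (\<integral>x. indicator {t' k<..} x * (x - c)\<^sup>2 \<partial>M)"
      by (rule measure_mult_tail_var_le[OF sq pos])
    finally show ?case .
  qed
  have lim_measure: "(\<lambda>k. measure M {t' k<..} * K) \<longlonglongrightarrow> measure M {t..} * K"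
    using tendsto_integral_indicator_greaterThan_left[of "\<lambda>_. 1" t]
    by (intro tendsto_mult_right) (simp add: t'_def)
  have lim_integral: "(\<lambda>k. \<integral>x. indicator {t' k<..} x * (x - c)\<^sup>2 \<partial>M)
      \<longlonglongrightarrow> (\<integral>x. indicator {t..} x * (x - c)\<^sup>2 \<partial>M)"
    using integrable_indicator_mult_square_diff(3)[OF sq, of UNIV c] unfolding t'_def
    by (intro tendsto_integral_indicator_greaterThan_left) simp
  show ?thesis
    using trivial_limit_sequentially lim_integral lim_measure le by (rule tendsto_le)
qed

interpretation cdf_distribution M ..

lemma le_cdf_iff_quantile_le: "0 < p \<Longrightarrow> p < 1 \<Longrightarrow> p \<le> cdf M x \<longleftrightarrow> quantile (cdf M) p \<le> x"
  unfolding quantile_def by (rule pseudoinverse)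

lemma mono_on_quantile_cdf: "mono_on {0<..<1} (quantile (cdf M))"
  unfolding quantile_def by (rule mono_I)

lemma measurable_quantile_cdf: "quantile (cdf M) \<in> borel_measurable (restrict_space lborel {0<..<1})"
  unfolding quantile_def using measurable_CI
  by (simp add: measurable_cong_sets[OF sets_restrict_space_cong[OF sets_lborel]])

lemma distr_quantile_cdf: "distr (restrict_space lborel {0<..<1}) borel (quantile (cdf M)) = M"
  unfolding quantile_def by (rule distr_I_eq_M)

lemma measure_atLeast_quantile_cdf_ge:
  assumes "0 < s" "s < 1"
  shows "1 - s \<le> measure M {quantile (cdf M) s..}"
proof -
  have "measure M {..<quantile (cdf M) s} \<le> s"
  proof (rule tendsto_upperbound[OF cdf_at_left _ trivial_limit_at_left_real])
    have "cdf M x \<le> s" if "x < quantile (cdf M) s" for x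
      using that le_cdf_iff_quantile_le[OF assms, of x] by linarith
    then show "\<forall>\<^sub>F x in at_left (quantile (cdf M) s). cdf M x \<le> s"
      unfolding eventually_at_left_field by (intro exI[of _ "quantile (cdf M) s - 1"]) auto
  qed
  moreover have "measure M {quantile (cdf M) s..} = 1 - measure M {..<quantile (cdf M) s}"
  proof -
    have "measure M (space M - {..<quantile (cdf M) s}) = 1 - measure M {..<quantile (cdf M) s}"
      by (rule prob_compl) simp
    moreover have "space M - {..<quantile (cdf M) s} = {quantile (cdf M) s..}"
      by auto
    ultimately show ?thesis
      by simp
  qed
  ultimately show ?thesis
    by simp
qed

lemma integral_upper_quantiles_eq:
  assumes sq: "integrable M (\<lambda>x. x\<^sup>2)" and s: "0 < s" "s < 1"
    and t: "t = quantile (cdf M) s" and t_lt: "cdf M t < 1"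
  shows "(\<integral>p. indicator {s<..} p * (quantile (cdf M) p - c)\<^sup>2 \<partial>restrict_space lborel {0<..<1})
     = (cdf M t - s) * (t - c)\<^sup>2 + (\<integral>x. indicator {t<..} x * (x - c)\<^sup>2 \<partial>M)"
proof -
  define \<Omega> where "\<Omega> = restrict_space lborel {0<..<1::real}"
  define Q where "Q = quantile (cdf M)"
  define f where "f = (\<lambda>x. indicator {t<..} x * (x - c)\<^sup>2 :: real)"
  have Q_meas: "Q \<in> borel_measurable \<Omega>"
    unfolding Q_def \<Omega>_def by (rule measurable_quantile_cdf)
  have f_meas: "f \<in> borel_measurable borel"
    unfolding f_def by measurable
  have s_le: "s \<le> cdf M t"
    using le_cdf_iff_quantile_le[OF s] t by simp
  have split: "indicator {s<..} p * (Q p - c)\<^sup>2 = f (Q p) + (t - c)\<^sup>2 * indicator {s<..cdf M t} p"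
    if "p \<in> space \<Omega>" for p
  proof -
    have p: "0 < p" "p < 1"
      using that by (auto simp: \<Omega>_def)
    consider "p \<le> s" | "s < p" "p \<le> cdf M t" | "cdf M t < p"
      by linarith
    then show ?thesis
    proof cases
      case 1
      then have "Q p \<le> t"
        using mono_on_quantile_cdf p s by (auto simp: t Q_def intro: mono_onD)
      then show ?thesis
        using 1 by (simp add: f_def)
    next
      case 2
      then have "Q p = t"
        using mono_onD[OF mono_on_quantile_cdf, of s p] le_cdf_iff_quantile_le[OF p, of t] p s
        by (auto simp: t Q_def)
      then show ?thesis
        using 2 by (simp add: f_def)
    next
      case 3
      then have "t < Q p"
        using le_cdf_iff_quantile_le[OF p, of t] by (auto simp: Q_def)
      then show ?thesis
        using 3 s_le by (simp add: f_def)
    qed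
  qed
  have f_int: "integrable \<Omega> (\<lambda>p. f (Q p))"
    using integrable_indicator_mult_square_diff(3)[OF sq, of "{t<..}" c] distr_quantile_cdf
      integrable_distr_eq[OF Q_meas f_meas]
    by (simp add: f_def Q_def \<Omega>_def)
  have interval: "{s<..cdf M t} \<subseteq> {0<..<1}"
    using s t_lt by auto
  then have measure_interval: "measure \<Omega> {s<..cdf M t} = cdf M t - s"
    unfolding \<Omega>_def using s_le
    by (subst measure_restrict_space) (auto simp: Int_absorb2)
  have indicator_int: "integrable \<Omega> (indicator {s<..cdf M t} :: real \<Rightarrow> real)"
    using interval unfolding \<Omega>_def
    by (intro integrable_real_indicator)
      (auto simp: sets_restrict_space_iff emeasure_restrict_space Int_absorb2 s_le)
  have "(\<integral>p. indicator {s<..} p * (Q p - c)\<^sup>2 \<partial>\<Omega>)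
      = (\<integral>p. f (Q p) + (t - c)\<^sup>2 * indicator {s<..cdf M t} p \<partial>\<Omega>)"
    using split by (rule Bochner_Integration.integral_cong[OF refl])
  also have "\<dots> = (\<integral>p. f (Q p) \<partial>\<Omega>) + (t - c)\<^sup>2 * measure \<Omega> {s<..cdf M t}"
    using f_int indicator_int interval by (simp add: \<Omega>_def Int_absorb2)
  also have "\<dots> = (\<integral>x. f x \<partial>M) + (t - c)\<^sup>2 * (cdf M t - s)"
    using integral_distr[OF Q_meas f_meas] distr_quantile_cdf measure_interval
    by (simp add: Q_def \<Omega>_def)
  finally show ?thesis
    by (simp add: f_def Q_def \<Omega>_def)
qed

lemma integral_upper_quantiles_ge:
  assumes sq: "integrable M (\<lambda>x. x\<^sup>2)" and K: "0 < K"
    and tail: "\<And>t. T \<le> t \<Longrightarrow> K \<le> tail_var M t" and s: "cdf M T < s" "s < 1"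
  shows "(1 - s) * K
    \<le> (\<integral>p. indicator {s<..} p * (quantile (cdf M) p - c)\<^sup>2 \<partial>restrict_space lborel {0<..<1})"
proof -
  have s_pos: "0 < s"
    using s cdf_nonneg[of T] by linarith
  define t where "t = quantile (cdf M) s"
  have "T < t"
    using le_cdf_iff_quantile_le[OF s_pos s(2), of T] s by (auto simp: t_def)
  have s_le: "s \<le> cdf M t"
    using le_cdf_iff_quantile_le[OF s_pos s(2), of t] by (simp add: t_def)
  define q where "q = measure M {t<..}"
  define a where "a = measure M {t}"
  define D where "D = (t - c)\<^sup>2"
  define E where "E = (\<integral>x. indicator {t<..} x * (x - c)\<^sup>2 \<partial>M)"
  have q_pos: "0 < q"
    using tail[of t] \<open>T < t\<close> K unfolding q_def
    by (intro measure_greaterThan_pos_if_tail_var_pos) simp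
  have cdf_t: "cdf M t = 1 - q"
    by (simp add: measure_greaterThan_eq_1_minus_cdf q_def)
  have open_tail: "q * K \<le> E"
  proof -
    have "q * K \<le> q * tail_var M t"
      using tail[of t] \<open>T < t\<close> q_pos by simp
    also have "\<dots> \<le> E"
      unfolding q_def E_def using q_pos q_def by (intro measure_mult_tail_var_le[OF sq]) simp
    finally show ?thesis .
  qed
  have measure_closed_tail: "measure M {t..} = a + q"
  proof -
    have "measure M {t..} = measure M ({t} \<union> {t<..})"
      by (metis ivl_disj_un_singleton(1))
    also have "\<dots> = a + q"
      unfolding a_def q_def by (rule finite_measure_Union) auto
    finally show ?thesis .
  qed
  have integral_closed_tail: "(\<integral>x. indicator {t..} x * (x - c)\<^sup>2 \<partial>M) = a * D + E"
  proof -
    have "(\<lambda>x. indicator {t..} x * (x - c)\<^sup>2) = (\<lambda>x. indicator {t<..} x * (x - c)\<^sup>2 + D * indicator {t} x)"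
      by (auto simp: indicator_def D_def)
    moreover have "integrable M (\<lambda>x. D * indicator {t} x :: real)"
      by (intro integrable_mult_right integrable_real_indicator) (auto simp: emeasure_eq_measure)
    ultimately show ?thesis
      using integrable_indicator_mult_square_diff(3)[OF sq, of "{t<..}" c]
      by (simp add: E_def a_def mult.commute)
  qed
  have closed_tail: "(a + q) * K \<le> a * D + E"
    using measure_atLeast_mult_le_integral[OF sq K tail \<open>T < t\<close>, of c]
    by (simp add: measure_closed_tail integral_closed_tail)
  have atom: "cdf M t - s \<le> a"
    using measure_atLeast_quantile_cdf_ge[OF s_pos s(2)] measure_closed_tail cdf_t
    by (simp add: t_def)
  \<comment> \<open>Only the mass cdf M t - s \<le> a of the atom at t lies above level s:
    interpolate between the bounds for the open and the closed tail.\<close>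
  have "(1 - s) * K = (cdf M t - s) * K + q * K"
    by (simp add: cdf_t algebra_simps)
  also have "\<dots> \<le> (cdf M t - s) * D + E"
  proof (cases "K \<le> D")
    case True
    then show ?thesis
      using open_tail s_le by (smt (verit) mult_left_mono)
  next
    case False
    then have "(cdf M t - s) * (K - D) \<le> a * (K - D)"
      using atom by (intro mult_right_mono) auto
    then show ?thesis
      using closed_tail by (simp add: algebra_simps)
  qed
  also have "\<dots> = (\<integral>p. indicator {s<..} p * (quantile (cdf M) p - c)\<^sup>2 \<partial>restrict_space lborel {0<..<1})"
    using integral_upper_quantiles_eq[OF sq s_pos s(2) t_def] q_pos cdf_t
    by (simp add: D_def E_def)
  finally show ?thesis .
qed

lemma integrable_square_diff_quantile_ecdf:
  fixes X :: "nat \<Rightarrow> 'a \<Rightarrow> real"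
  assumes sq: "integrable M (\<lambda>x. x\<^sup>2)" and n: "0 < n"
  shows "integrable (restrict_space lborel {0<..<1})
    (\<lambda>p. \<bar>quantile (ecdf X n \<omega>) p - quantile (cdf M) p\<bar>\<^sup>2)"
proof -
  define \<Omega> where "\<Omega> = restrict_space lborel {0<..<1::real}"
  define H where "H = quantile (ecdf X n \<omega>)"
  define Q where "Q = quantile (cdf M)"
  define B where "B = max \<bar>sample_min X n \<omega>\<bar> \<bar>sample_max X n \<omega>\<bar>"
  have Q_meas: "Q \<in> borel_measurable \<Omega>"
    unfolding Q_def \<Omega>_def by (rule measurable_quantile_cdf)
  have "mono_on {0<..<1} H"
    using mono_on_quantile_ecdf[OF n] unfolding H_def by (rule mono_on_subset) auto
  then have H_meas: "H \<in> borel_measurable \<Omega>"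
    unfolding \<Omega>_def using borel_measurable_mono_on_fnc
    by (simp add: measurable_cong_sets[OF sets_restrict_space_cong[OF sets_lborel]])
  have "integrable \<Omega> (\<lambda>p. (Q p)\<^sup>2)"
    using sq distr_quantile_cdf integrable_distr_eq[OF Q_meas, of "\<lambda>x. x\<^sup>2"]
    by (simp add: Q_def \<Omega>_def)
  moreover have "finite_measure \<Omega>"
    unfolding \<Omega>_def by (intro finite_measureI) (simp add: emeasure_restrict_space)
  ultimately have "integrable \<Omega> (\<lambda>p. 2 * B\<^sup>2 + 2 * (Q p)\<^sup>2)"
    by (simp add: finite_measure.integrable_const)
  then have "integrable \<Omega> (\<lambda>p. \<bar>H p - Q p\<bar>\<^sup>2)"
  proof (rule Bochner_Integration.integrable_bound)
    show "(\<lambda>p. \<bar>H p - Q p\<bar>\<^sup>2) \<in> borel_measurable \<Omega>"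
      using H_meas Q_meas by measurable
    show "AE p in \<Omega>. norm (\<bar>H p - Q p\<bar>\<^sup>2) \<le> norm (2 * B\<^sup>2 + 2 * (Q p)\<^sup>2)"
    proof (rule AE_I2)
      fix p
      assume "p \<in> space \<Omega>"
      then have "0 < p" "p \<le> 1"
        by (auto simp: \<Omega>_def)
      then have "sample_min X n \<omega> \<le> H p" "H p \<le> sample_max X n \<omega>"
        unfolding H_def
        by (simp_all add: sample_min_le_quantile_ecdf[OF n] quantile_ecdf_le_sample_max[OF n])
      then have "\<bar>H p\<bar> \<le> B"
        by (auto simp: B_def abs_le_iff le_max_iff_disj)
      then have "(H p)\<^sup>2 \<le> B\<^sup>2"
        using power_mono[of "\<bar>H p\<bar>" B 2] by simp
      moreover have "\<bar>H p - Q p\<bar>\<^sup>2 \<le> 2 * (H p)\<^sup>2 + 2 * (Q p)\<^sup>2"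
        using sum_squares_ge_zero[of "H p + Q p" 0] by (simp add: power2_eq_square algebra_simps)
      ultimately show "norm (\<bar>H p - Q p\<bar>\<^sup>2) \<le> norm (2 * B\<^sup>2 + 2 * (Q p)\<^sup>2)"
        by simp
    qed
  qed
  then show ?thesis
    by (simp add: H_def Q_def \<Omega>_def)
qed

lemma integral_upper_quantiles_le_mallows_d2:
  fixes X :: "nat \<Rightarrow> 'a \<Rightarrow> real"
  assumes sq: "integrable M (\<lambda>x. x\<^sup>2)" and n: "0 < n"
  shows "(\<integral>p. indicator {1 - 1 / n<..} p * (quantile (cdf M) p - sample_max X n \<omega>)\<^sup>2
      \<partial>restrict_space lborel {0<..<1}) \<le> (mallows_d2 (ecdf X n \<omega>) (cdf M))\<^sup>2"
proof -
  define \<Omega> where "\<Omega> = restrict_space lborel {0<..<1::real}"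
  define H where "H = quantile (ecdf X n \<omega>)"
  define Q where "Q = quantile (cdf M)"
  have diff_int: "integrable \<Omega> (\<lambda>p. \<bar>H p - Q p\<bar>\<^sup>2)"
    using integrable_square_diff_quantile_ecdf[OF sq n] by (simp add: H_def Q_def \<Omega>_def)
  have "(\<integral>p. indicator {1 - 1 / n<..} p * (Q p - sample_max X n \<omega>)\<^sup>2 \<partial>\<Omega>)
      \<le> (\<integral>p. \<bar>H p - Q p\<bar>\<^sup>2 \<partial>\<Omega>)"
  proof (rule integral_mono'[OF diff_int])
    fix p
    assume "p \<in> space \<Omega>"
    then have p: "0 < p" "p < 1"
      by (auto simp: \<Omega>_def)
    show "indicator {1 - 1 / n<..} p * (Q p - sample_max X n \<omega>)\<^sup>2 \<le> \<bar>H p - Q p\<bar>\<^sup>2"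
      using quantile_ecdf_eq_sample_max[OF n, of p X \<omega>] p
      by (auto simp: indicator_def H_def power2_commute)
  qed simp
  also have "\<dots> = (mallows_d2 (ecdf X n \<omega>) (cdf M))\<^sup>2"
  proof -
    have "(LBINT p:{0<..<1}. \<bar>H p - Q p\<bar>\<^sup>2) = (\<integral>p. \<bar>H p - Q p\<bar>\<^sup>2 \<partial>\<Omega>)"
      unfolding \<Omega>_def set_lebesgue_integral_def by (subst integral_restrict_space) auto
    moreover have "0 \<le> (\<integral>p. \<bar>H p - Q p\<bar>\<^sup>2 \<partial>\<Omega>)"
      by (intro Bochner_Integration.integral_nonneg) simp
    ultimately show ?thesis
      by (simp add: mallows_d2_def H_def Q_def)
  qed
  finally show ?thesis
    by (simp add: Q_def \<Omega>_def)
qed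

lemma mallows_d2_ecdf_ge:
  fixes X :: "nat \<Rightarrow> 'a \<Rightarrow> real"
  assumes sq: "integrable M (\<lambda>x. x\<^sup>2)" and K: "0 < K"
    and tail: "\<And>t. T \<le> t \<Longrightarrow> K \<le> tail_var M t"
    and n: "0 < n" and n_large: "cdf M T < 1 - 1 / n"
  shows "K \<le> n * (mallows_d2 (ecdf X n \<omega>) (cdf M))\<^sup>2"
proof -
  have "K / n \<le> (mallows_d2 (ecdf X n \<omega>) (cdf M))\<^sup>2"
    using integral_upper_quantiles_ge[OF sq K tail n_large, of "sample_max X n \<omega>"]
      integral_upper_quantiles_le_mallows_d2[OF sq n, of X \<omega>] n
    by simp
  then show ?thesis
    using n by (simp add: field_simps)
qed

lemma filterlim_sqrt_mult_mallows_d2_ecdf: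
  fixes X :: "nat \<Rightarrow> 'a \<Rightarrow> real"
  assumes sq: "integrable M (\<lambda>x. x\<^sup>2)" and tail: "filterlim (tail_var M) at_top at_top"
  shows "filterlim (\<lambda>n. sqrt n * mallows_d2 (ecdf X n \<omega>) (cdf M)) at_top sequentially"
  unfolding filterlim_at_top
proof
  fix Z :: real
  define K where "K = Z\<^sup>2 + 1"
  have K: "0 < K"
    by (simp add: K_def add_nonneg_pos)
  obtain T where T: "\<And>t. T \<le> t \<Longrightarrow> K \<le> tail_var M t"
    using tail unfolding filterlim_at_top eventually_at_top_linorder by blast
  have "cdf M T < 1"
    using measure_greaterThan_pos_if_tail_var_pos[of M T] T[of T] K
    by (simp add: measure_greaterThan_eq_1_minus_cdf)
  then have "\<forall>\<^sub>F n in sequentially. 1 / real n < 1 - cdf M T"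
    using lim_1_over_n by (intro order_tendstoD(2)) auto
  with eventually_gt_at_top[of 0]
  show "\<forall>\<^sub>F n in sequentially. Z \<le> sqrt n * mallows_d2 (ecdf X n \<omega>) (cdf M)"
  proof eventually_elim
    case (elim n)
    then have "Z\<^sup>2 < n * (mallows_d2 (ecdf X n \<omega>) (cdf M))\<^sup>2"
      using mallows_d2_ecdf_ge[where T=T and X=X and \<omega>=\<omega>, OF sq K T elim(1)]
      by (simp add: K_def)
    then have "sqrt (Z\<^sup>2) \<le> sqrt (n * (mallows_d2 (ecdf X n \<omega>) (cdf M))\<^sup>2)"
      by (intro real_sqrt_le_mono less_imp_le)
    also have "\<dots> = sqrt n * mallows_d2 (ecdf X n \<omega>) (cdf M)"
      by (simp add: real_sqrt_mult mallows_d2_nonneg)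
    finally show ?case
      by simp
  qed
qed

end

theorem proposition3p5:
  fixes M :: "'a measure" and X :: "nat \<Rightarrow> 'a \<Rightarrow> real" and Y :: "'a \<Rightarrow> real"
  assumes "prob_space M"
    and "\<And>i. X i \<in> borel_measurable M"
    and "Y \<in> borel_measurable M"
    and "prob_space.indep_vars M (\<lambda>_. borel) X UNIV"
    and "\<And>i. distr M borel (X i) = distr M borel Y"
    and "integrable M (\<lambda>\<omega>. (Y \<omega>)\<^sup>2)"
    and "filterlim (tail_var (distr M borel Y)) at_top at_top"
  shows "AE \<omega> in M. filterlim
           (\<lambda>n. sqrt (real n) * mallows_d2 (ecdf X n \<omega>) (cdf_of (distr M borel Y)))
           at_top sequentially"
proof (rule AE_I2)
  fix \<omega>
  interpret prob_space M
    by fact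
  interpret Y: real_distribution "distr M borel Y"
    using assms(3) by (rule real_distribution_distr)
  have "integrable (distr M borel Y) (\<lambda>x. x\<^sup>2)"
    using integrable_distr_eq[OF assms(3), of "\<lambda>x. x\<^sup>2"] assms(6) by simp
  then show "filterlim (\<lambda>n. sqrt (real n) * mallows_d2 (ecdf X n \<omega>) (cdf_of (distr M borel Y)))
      at_top sequentially"
    unfolding cdf_of_eq_cdf using assms(7) by (rule Y.filterlim_sqrt_mult_mallows_d2_ecdf)
qed

end
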